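(* Let $G$, $\rho'$, $\chi$, $d$, $v_1,v_2$, $\Phi_1,\Phi_2$, $V_1,V_2\subseteq L^2(G)$ and the $G$-linear unitary map $M:V_1\to V_2$ (extended by $0$ on $V_1^\perp$) be as follows: $G$ is a finite group, $\rho':G\to \mathrm{U}(\mathcal{H})$ is an irreducible unitary representation on a $d$-dimensional complex Hilbert space with character $\chi$, $v_1,v_2\in\mathcal{H}$ are nonzero, $\Phi_i=(\rho'(g)v_i)_{g\in G}$, and $V_i$ is the column space of the Gram matrix of $\Phi_i$. Let $\Pi_{V_i}$ denote the orthogonal projection of $L^2(G)$ onto $V_i$. For $a\in G$ let $\chi_a(g)=\chi(ga)$ and $A_{\chi,a}f=f*\overline{\chi_a}$ for $f\in L^2(G)$. Then for every $a\in G$ there is $\lambda_a\in\mathbb{C}$ such that $$\lambda_a Mf=\Pi_{V_2}A_{\chi,a}\Pi_{V_1}f\quad\text{for all }f\in L^2(G),$$ and $\lambda_a\neq 0$ for at least one $a\in G$.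
   Context: $L^2(G)$ is the space of functions $G\to\mathbb{C}$ with convolution $(f*h)(s)=\sum_{x\in G}f(x)h(x^{-1}s)$ and left regular representation $\rho(g)f=\delta_g*f$. The Gram matrix of $\Phi_i$ is $[\langle\rho'(g_2)v_i,\rho'(g_1)v_i\rangle]_{g_1,g_2\in G}$; its column space $V_i$ is invariant and irreducible under the left regular representation with character $\chi$. $M$ is $G$-linear: it commutes with $\rho(g)$ for all $g$. *)

theory Defs
  imports "HOL-Algebra.Group" "Jordan_Normal_Form.Schur_Decomposition"
begin

(* Unitary representation of a finite group G (HOL-Algebra) on the d-dimensional
   complex Hilbert space C^d, with inner product  <x,y> = x \<bullet>c y  (linear in x). *)
definition unitary_rep :: "('a, 'b) monoid_scheme \<Rightarrow> nat \<Rightarrow> ('a \<Rightarrow> complex mat) \<Rightarrow> bool" where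
  "unitary_rep G d \<rho> \<longleftrightarrow>
     (\<forall>g\<in>carrier G. \<rho> g \<in> carrier_mat d d \<and> mat_adjoint (\<rho> g) * \<rho> g = 1\<^sub>m d) \<and>
     (\<forall>g\<in>carrier G. \<forall>h\<in>carrier G. \<rho> (g \<otimes>\<^bsub>G\<^esub> h) = \<rho> g * \<rho> h)"

definition csubspace_vec :: "nat \<Rightarrow> complex vec set \<Rightarrow> bool" where
  "csubspace_vec d W \<longleftrightarrow> W \<subseteq> carrier_vec d \<and> 0\<^sub>v d \<in> W \<and>
     (\<forall>x\<in>W. \<forall>y\<in>W. x + y \<in> W) \<and> (\<forall>c. \<forall>x\<in>W. c \<cdot>\<^sub>v x \<in> W)"

definition irreducible_rep :: "('a, 'b) monoid_scheme \<Rightarrow> nat \<Rightarrow> ('a \<Rightarrow> complex mat) \<Rightarrow> bool" where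
  "irreducible_rep G d \<rho> \<longleftrightarrow> d > 0 \<and>
     (\<forall>W. csubspace_vec d W \<and> (\<forall>g\<in>carrier G. \<forall>w\<in>W. \<rho> g *\<^sub>v w \<in> W)
          \<longrightarrow> W = {0\<^sub>v d} \<or> W = carrier_vec d)"

definition character :: "nat \<Rightarrow> ('a \<Rightarrow> complex mat) \<Rightarrow> 'a \<Rightarrow> complex" where
  "character d \<rho> g = (\<Sum>i<d. \<rho> g $$ (i, i))"

definition L2 :: "('a, 'b) monoid_scheme \<Rightarrow> ('a \<Rightarrow> complex) set" where
  "L2 G = {f. \<forall>x. x \<notin> carrier G \<longrightarrow> f x = 0}"

definition l2_inner :: "('a, 'b) monoid_scheme \<Rightarrow> ('a \<Rightarrow> complex) \<Rightarrow> ('a \<Rightarrow> complex) \<Rightarrow> complex" where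
  "l2_inner G f h = (\<Sum>x\<in>carrier G. f x * cnj (h x))"

definition conv :: "('a, 'b) monoid_scheme \<Rightarrow> ('a \<Rightarrow> complex) \<Rightarrow> ('a \<Rightarrow> complex) \<Rightarrow> 'a \<Rightarrow> complex" where
  "conv G f h s = (if s \<in> carrier G then
      (\<Sum>x\<in>carrier G. f x * h (inv\<^bsub>G\<^esub> x \<otimes>\<^bsub>G\<^esub> s)) else 0)"

definition delta :: "('a, 'b) monoid_scheme \<Rightarrow> 'a \<Rightarrow> 'a \<Rightarrow> complex" where
  "delta G g x = (if x = g \<and> x \<in> carrier G then 1 else 0)"

definition left_reg :: "('a, 'b) monoid_scheme \<Rightarrow> 'a \<Rightarrow> ('a \<Rightarrow> complex) \<Rightarrow> 'a \<Rightarrow> complex" where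
  "left_reg G g f = conv G (delta G g) f"

definition gram :: "('a \<Rightarrow> complex mat) \<Rightarrow> complex vec \<Rightarrow> 'a \<Rightarrow> 'a \<Rightarrow> complex" where
  "gram \<rho> v g1 g2 = (\<rho> g2 *\<^sub>v v) \<bullet>c (\<rho> g1 *\<^sub>v v)"

definition gram_colspace :: "('a, 'b) monoid_scheme \<Rightarrow> ('a \<Rightarrow> complex mat) \<Rightarrow> complex vec \<Rightarrow> ('a \<Rightarrow> complex) set" where
  "gram_colspace G \<rho> v = {f. \<exists>c :: 'a \<Rightarrow> complex. \<forall>g1.
      f g1 = (if g1 \<in> carrier G then (\<Sum>g2\<in>carrier G. gram \<rho> v g1 g2 * c g2) else 0)}"

definition orth_proj :: "('a, 'b) monoid_scheme \<Rightarrow> ('a \<Rightarrow> complex) set \<Rightarrow> ('a \<Rightarrow> complex) \<Rightarrow> 'a \<Rightarrow> complex" where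
  "orth_proj G V f = (THE p. p \<in> V \<and> (\<forall>w\<in>V. l2_inner G (\<lambda>x. f x - p x) w = 0))"

definition A_op :: "('a, 'b) monoid_scheme \<Rightarrow> ('a \<Rightarrow> complex) \<Rightarrow> 'a \<Rightarrow> ('a \<Rightarrow> complex) \<Rightarrow> 'a \<Rightarrow> complex" where
  "A_op G \<chi> a f = conv G f (\<lambda>g. cnj (\<chi> (g \<otimes>\<^bsub>G\<^esub> a)))"

end

theory Submission
  imports Defs "Jordan_Normal_Form.Spectral_Radius"
begin

(* For nonzero v, the Gram column space of v consists exactly of the matrix coefficients
   s \<mapsto> <w, \<rho>(s) v>.  Schur's lemma, applied to the intertwiner w \<mapsto> \<Sum>_x <w, \<rho>(x) v> \<rho>(x) u,
   gives the orthogonality relations \<Sum>_x <w, \<rho>(x) v> <\<rho>(x) u, z> = c <u, v> <w, z> with c \<noteq> 0.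
   They make everything explicit: the projection onto the column space of v sends f to the
   coefficient of the vector \<Sum>_x f(x) \<rho>(x) v / (c <v, v>); A_{\<chi>,a} multiplies the coefficient
   of (v, w) by c and replaces v by \<rho>(a) v; and a G-linear M sends the coefficient of (v1, w)
   to \<nu> times the coefficient of (v2, w) for one constant \<nu>, nonzero because M is onto V2.
   So both sides of the claim are multiples of the same coefficient, with
   \<lambda>_a = c <v2, \<rho>(a) v1> / (<v2, v2> \<nu>), and the orthogonality relations show
   <v2, \<rho>(a) v1> \<noteq> 0 for some a. *)

lemma mat_adjoint_carrier: "A \<in> carrier_mat n n \<Longrightarrow> mat_adjoint A \<in> carrier_mat n n"
  unfolding mat_adjoint_def by auto

lemma mat_adjoint_index:
  "A \<in> carrier_mat n n \<Longrightarrow> i < n \<Longrightarrow> j < n \<Longrightarrow> mat_adjoint A $$ (i, j) = cnj (A $$ (j, i))"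
  unfolding mat_adjoint_def by (auto simp: mat_of_rows_def)

lemma cscalar_prod_conj_swap:
  fixes u z :: "complex vec"
  assumes "u \<in> carrier_vec n" "z \<in> carrier_vec n"
  shows "u \<bullet>c z = cnj (z \<bullet>c u)"
  using assms by (simp add: scalar_prod_def mult.commute)

lemma cscalar_prod_unit_vec:
  fixes v :: "complex vec"
  assumes "v \<in> carrier_vec n" "i < n"
  shows "v \<bullet>c unit_vec n i = v $ i" "unit_vec n i \<bullet>c v = cnj (v $ i)"
proof -
  have "conjugate (unit_vec n i) = (unit_vec n i :: complex vec)"
    by (auto simp: unit_vec_def)
  then show "v \<bullet>c unit_vec n i = v $ i" using assms by simp
  show "unit_vec n i \<bullet>c v = cnj (v $ i)" using assms by simp
qed

lemma cscalar_prod_mat_adjoint: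
  fixes u z :: "complex vec"
  assumes A: "A \<in> carrier_mat n n" and u: "u \<in> carrier_vec n" and z: "z \<in> carrier_vec n"
  shows "(A *\<^sub>v u) \<bullet>c z = u \<bullet>c (mat_adjoint A *\<^sub>v z)"
proof -
  have "(A *\<^sub>v u) \<bullet>c z = (\<Sum>i<n. \<Sum>j<n. A $$ (i, j) * u $ j * cnj (z $ i))"
    using A u z by (simp add: scalar_prod_def lessThan_atLeast0 sum_distrib_right)
  also have "\<dots> = (\<Sum>j<n. \<Sum>i<n. A $$ (i, j) * u $ j * cnj (z $ i))"
    by (rule sum.swap)
  also have "\<dots> = u \<bullet>c (mat_adjoint A *\<^sub>v z)"
    using A u z mat_adjoint_carrier[OF A]
    by (simp add: scalar_prod_def lessThan_atLeast0 mat_adjoint_index sum_distrib_left mult_ac)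
  finally show ?thesis .
qed

lemma cscalar_prod_vec_sum_left:
  fixes a :: "'b \<Rightarrow> complex"
  assumes b: "\<And>y. y \<in> Y \<Longrightarrow> b y \<in> carrier_vec n" and z: "z \<in> carrier_vec n"
  shows "vec n (\<lambda>j. \<Sum>y\<in>Y. a y * b y $ j) \<bullet>c z = (\<Sum>y\<in>Y. a y * (b y \<bullet>c z))"
proof -
  have "vec n (\<lambda>j. \<Sum>y\<in>Y. a y * b y $ j) \<bullet>c z = (\<Sum>j<n. \<Sum>y\<in>Y. a y * b y $ j * cnj (z $ j))"
    using z by (simp add: scalar_prod_def lessThan_atLeast0 sum_distrib_right)
  also have "\<dots> = (\<Sum>y\<in>Y. \<Sum>j<n. a y * b y $ j * cnj (z $ j))"
    by (rule sum.swap)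
  also have "\<dots> = (\<Sum>y\<in>Y. a y * (b y \<bullet>c z))"
    using b z by (intro sum.cong) (auto simp: scalar_prod_def lessThan_atLeast0 sum_distrib_left mult.assoc)
  finally show ?thesis .
qed

lemma mult_mat_vec_sum:
  fixes A :: "complex mat" and a :: "'b \<Rightarrow> complex"
  assumes A: "A \<in> carrier_mat n n" and b: "\<And>y. y \<in> Y \<Longrightarrow> b y \<in> carrier_vec n"
  shows "A *\<^sub>v vec n (\<lambda>j. \<Sum>y\<in>Y. a y * b y $ j) = vec n (\<lambda>i. \<Sum>y\<in>Y. a y * (A *\<^sub>v b y) $ i)"
proof (rule eq_vecI)
  fix i assume "i < dim_vec (vec n (\<lambda>i. \<Sum>y\<in>Y. a y * (A *\<^sub>v b y) $ i))"
  then have i: "i < n" by simp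
  have "(A *\<^sub>v vec n (\<lambda>j. \<Sum>y\<in>Y. a y * b y $ j)) $ i = (\<Sum>j<n. \<Sum>y\<in>Y. a y * (A $$ (i, j) * b y $ j))"
    using A i by (simp add: scalar_prod_def lessThan_atLeast0 sum_distrib_left mult_ac)
  also have "\<dots> = (\<Sum>y\<in>Y. \<Sum>j<n. a y * (A $$ (i, j) * b y $ j))"
    by (rule sum.swap)
  also have "\<dots> = (\<Sum>y\<in>Y. a y * (A *\<^sub>v b y) $ i)"
  proof (rule sum.cong[OF refl])
    fix y assume "y \<in> Y"
    then show "(\<Sum>j<n. a y * (A $$ (i, j) * b y $ j)) = a y * (A *\<^sub>v b y) $ i"
      using A i b[of y] by (auto simp: scalar_prod_def lessThan_atLeast0 sum_distrib_left)
  qed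
  finally show "(A *\<^sub>v vec n (\<lambda>j. \<Sum>y\<in>Y. a y * b y $ j)) $ i = vec n (\<lambda>i. \<Sum>y\<in>Y. a y * (A *\<^sub>v b y) $ i) $ i"
    using i by simp
qed (use A in simp)

lemma mult_mat_vec_unit_vec:
  fixes A :: "'a :: semiring_1 mat"
  shows "A \<in> carrier_mat n n \<Longrightarrow> i < n \<Longrightarrow> A *\<^sub>v unit_vec n i = col A i"
  by auto

lemma cscalar_prod_mult_mat_vec_cols:
  fixes w v :: "complex vec"
  assumes A: "A \<in> carrier_mat n n" and w: "w \<in> carrier_vec n" and v: "v \<in> carrier_vec n"
  shows "w \<bullet>c (A *\<^sub>v v) = (\<Sum>i<n. cnj (v $ i) * (w \<bullet>c col A i))"
proof -
  have "w \<bullet>c (A *\<^sub>v v) = (\<Sum>k<n. \<Sum>i<n. w $ k * cnj (A $$ (k, i)) * cnj (v $ i))"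
    using A w v by (simp add: scalar_prod_def lessThan_atLeast0 sum_distrib_left mult_ac)
  also have "\<dots> = (\<Sum>i<n. \<Sum>k<n. w $ k * cnj (A $$ (k, i)) * cnj (v $ i))"
    by (rule sum.swap)
  also have "\<dots> = (\<Sum>i<n. cnj (v $ i) * (w \<bullet>c col A i))"
    using A w by (intro sum.cong refl)
      (auto simp: scalar_prod_def lessThan_atLeast0 sum_distrib_left mult_ac)
  finally show ?thesis .
qed

lemma cnj_trace_adjoint_mult:
  fixes A B :: "complex mat"
  assumes A: "A \<in> carrier_mat n n" and B: "B \<in> carrier_mat n n"
  shows "cnj (\<Sum>i<n. (mat_adjoint A * B) $$ (i, i)) = (\<Sum>i<n. col A i \<bullet>c col B i)"
proof (simp only: cnj_sum, intro sum.cong refl)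
  fix i assume "i \<in> {..<n}"
  then show "cnj ((mat_adjoint A * B) $$ (i, i)) = col A i \<bullet>c col B i"
    using A B mat_adjoint_carrier[OF A]
    by (auto simp: scalar_prod_def lessThan_atLeast0 mat_adjoint_index mult.commute intro!: sum.cong)
qed

lemma l2_inner_diff_left: "l2_inner G (\<lambda>x. f x - h x) k = l2_inner G f k - l2_inner G h k"
  unfolding l2_inner_def by (simp add: sum_subtractf left_diff_distrib)

lemma l2_inner_self_eq_0:
  assumes "finite (carrier G)" "l2_inner G f f = 0" "x \<in> carrier G"
  shows "f x = 0"
proof -
  have "of_real (\<Sum>y\<in>carrier G. (cmod (f y))\<^sup>2) = l2_inner G f f"
    unfolding l2_inner_def of_real_sum complex_norm_square ..
  then have "(\<Sum>y\<in>carrier G. (cmod (f y))\<^sup>2) = 0"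
    using assms(2) by (metis of_real_eq_0_iff)
  then show ?thesis using assms(1,3) by (simp add: sum_nonneg_eq_0_iff)
qed

lemma orth_proj_eqI:
  assumes fin: "finite (carrier G)" and V: "V \<subseteq> L2 G"
    and diff: "\<And>p q. p \<in> V \<Longrightarrow> q \<in> V \<Longrightarrow> (\<lambda>x. p x - q x) \<in> V"
    and p: "p \<in> V" and orth: "\<And>w. w \<in> V \<Longrightarrow> l2_inner G (\<lambda>x. f x - p x) w = 0"
  shows "orth_proj G V f = p"
  unfolding orth_proj_def
proof (rule the_equality)
  show "p \<in> V \<and> (\<forall>w\<in>V. l2_inner G (\<lambda>x. f x - p x) w = 0)" using p orth by blast
next
  fix q assume q: "q \<in> V \<and> (\<forall>w\<in>V. l2_inner G (\<lambda>x. f x - q x) w = 0)"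
  have pq: "(\<lambda>x. p x - q x) \<in> V" using diff p q by blast
  have "l2_inner G (\<lambda>x. p x - q x) (\<lambda>x. p x - q x)
      = l2_inner G (\<lambda>x. f x - q x) (\<lambda>x. p x - q x) - l2_inner G (\<lambda>x. f x - p x) (\<lambda>x. p x - q x)"
    by (simp add: l2_inner_diff_left[symmetric])
  then have "l2_inner G (\<lambda>x. p x - q x) (\<lambda>x. p x - q x) = 0" using q orth pq by simp
  then have "q x = p x" if "x \<in> carrier G" for x
    using l2_inner_self_eq_0[of G "\<lambda>x. p x - q x" x] fin that by simp
  moreover have "q x = p x" if "x \<notin> carrier G" for x
  proof -
    have "p \<in> L2 G" "q \<in> L2 G" using V p q by auto
    then show ?thesis using that unfolding L2_def by simp
  qed
  ultimately show "q = p" by blast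
qed

section \<open>Matrix coefficients of a unitary irreducible representation\<close>

lemma (in group) sum_left_translate:
  assumes "g \<in> carrier G"
  shows "(\<Sum>x\<in>carrier G. f (g \<otimes> x)) = (\<Sum>x\<in>carrier G. f x)"
proof -
  have "bij_betw (\<lambda>x. g \<otimes> x) (carrier G) (carrier G)"
    by (rule bij_betw_byWitness[where f'="\<lambda>x. inv g \<otimes> x"]) (use assms in \<open>auto simp: m_assoc[symmetric]\<close>)
  then show ?thesis by (rule sum.reindex_bij_betw)
qed

lemma (in group) sum_inv_reindex: "(\<Sum>x\<in>carrier G. f (inv x)) = (\<Sum>x\<in>carrier G. f x)"
proof -
  have "bij_betw (\<lambda>x. inv x) (carrier G) (carrier G)"
    by (rule bij_betw_byWitness[where f'="\<lambda>x. inv x"]) auto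
  then show ?thesis by (rule sum.reindex_bij_betw)
qed

locale unitary_irrep = group G for G :: "('a, 'b) monoid_scheme" (structure) +
  fixes d :: nat and \<rho> :: "'a \<Rightarrow> complex mat"
  assumes finite_carrier: "finite (carrier G)"
    and unitary: "unitary_rep G d \<rho>" and irreducible: "irreducible_rep G d \<rho>"
begin

lemma rep_carrier: "g \<in> carrier G \<Longrightarrow> \<rho> g \<in> carrier_mat d d"
  using unitary unfolding unitary_rep_def by auto

lemma rep_mult: "g \<in> carrier G \<Longrightarrow> h \<in> carrier G \<Longrightarrow> \<rho> (g \<otimes> h) = \<rho> g * \<rho> h"
  using unitary unfolding unitary_rep_def by auto

lemma rep_dim: "g \<in> carrier G \<Longrightarrow> dim_row (\<rho> g) = d" "g \<in> carrier G \<Longrightarrow> dim_col (\<rho> g) = d"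
  using rep_carrier by auto

lemma mult_rep_vec_carrier [simp]: "g \<in> carrier G \<Longrightarrow> u \<in> carrier_vec d \<Longrightarrow> \<rho> g *\<^sub>v u \<in> carrier_vec d"
  using rep_carrier by (metis mult_mat_vec_carrier)

lemma rep_mult_vec: "g \<in> carrier G \<Longrightarrow> h \<in> carrier G \<Longrightarrow> u \<in> carrier_vec d \<Longrightarrow> \<rho> (g \<otimes> h) *\<^sub>v u = \<rho> g *\<^sub>v (\<rho> h *\<^sub>v u)"
  by (simp add: rep_mult assoc_mult_mat_vec[OF rep_carrier rep_carrier])

lemma rep_adjoint_mult:
  assumes g: "g \<in> carrier G" and h: "h \<in> carrier G"
  shows "mat_adjoint (\<rho> g) * \<rho> (g \<otimes> h) = \<rho> h"
proof -
  have "mat_adjoint (\<rho> g) * \<rho> (g \<otimes> h) = (mat_adjoint (\<rho> g) * \<rho> g) * \<rho> h"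
    using g h by (simp add: rep_mult assoc_mult_mat[OF mat_adjoint_carrier rep_carrier rep_carrier] rep_carrier)
  also have "mat_adjoint (\<rho> g) * \<rho> g = 1\<^sub>m d" using unitary g unfolding unitary_rep_def by auto
  finally show ?thesis using rep_carrier[OF h] by simp
qed

lemma rep_one: "\<rho> \<one> = 1\<^sub>m d"
proof -
  have "mat_adjoint (\<rho> \<one>) * \<rho> \<one> = 1\<^sub>m d" using unitary unfolding unitary_rep_def by auto
  then show ?thesis using rep_adjoint_mult[of \<one> \<one>] by simp
qed

lemma rep_inv: "g \<in> carrier G \<Longrightarrow> \<rho> (inv g) = mat_adjoint (\<rho> g)"
  using rep_adjoint_mult[of g "inv g"] right_mult_one_mat[OF mat_adjoint_carrier[OF rep_carrier]]
  by (simp add: rep_one)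

lemma dim_pos: "d > 0"
  using irreducible unfolding irreducible_rep_def by auto

lemma commuting_mat_scalar:
  assumes C: "C \<in> carrier_mat d d"
    and comm: "\<And>g w. g \<in> carrier G \<Longrightarrow> w \<in> carrier_vec d \<Longrightarrow> C *\<^sub>v (\<rho> g *\<^sub>v w) = \<rho> g *\<^sub>v (C *\<^sub>v w)"
  shows "\<exists>c. \<forall>w\<in>carrier_vec d. C *\<^sub>v w = c \<cdot>\<^sub>v w"
proof -
  obtain c where "eigenvalue C c"
    using spectrum_non_empty[OF C dim_pos] unfolding spectrum_def by auto
  then obtain v where v: "v \<in> carrier_vec d" "v \<noteq> 0\<^sub>v d" "C *\<^sub>v v = c \<cdot>\<^sub>v v"
    unfolding eigenvalue_def eigenvector_def using C by auto
  define E where "E = {w \<in> carrier_vec d. C *\<^sub>v w = c \<cdot>\<^sub>v w}"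
  have "csubspace_vec d E"
    unfolding csubspace_vec_def E_def using C
    by (auto simp: mult_add_distrib_mat_vec smult_add_distrib_vec mult_mat_vec smult_smult_assoc mult.commute)
  moreover have "\<forall>g\<in>carrier G. \<forall>w\<in>E. \<rho> g *\<^sub>v w \<in> E"
    unfolding E_def using comm by (auto simp: mult_mat_vec[OF rep_carrier])
  ultimately have "E = {0\<^sub>v d} \<or> E = carrier_vec d"
    using irreducible unfolding irreducible_rep_def by blast
  moreover have "v \<in> E" using v unfolding E_def by auto
  ultimately have "E = carrier_vec d" using v by auto
  then show ?thesis unfolding E_def by auto
qed

definition matrix_coeff :: "complex vec \<Rightarrow> complex vec \<Rightarrow> 'a \<Rightarrow> complex" where
  "matrix_coeff v w s = (if s \<in> carrier G then w \<bullet>c (\<rho> s *\<^sub>v v) else 0)"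

definition orbit_sum :: "complex vec \<Rightarrow> ('a \<Rightarrow> complex) \<Rightarrow> complex vec" where
  "orbit_sum v f = vec d (\<lambda>i. \<Sum>x\<in>carrier G. f x * (\<rho> x *\<^sub>v v) $ i)"

lemma orbit_sum_carrier [simp]: "orbit_sum v f \<in> carrier_vec d"
  and dim_orbit_sum [simp]: "dim_vec (orbit_sum v f) = d"
  unfolding orbit_sum_def by simp_all

lemma cscalar_prod_orbit_sum:
  "v \<in> carrier_vec d \<Longrightarrow> z \<in> carrier_vec d \<Longrightarrow>
    orbit_sum v f \<bullet>c z = (\<Sum>x\<in>carrier G. f x * ((\<rho> x *\<^sub>v v) \<bullet>c z))"
  unfolding orbit_sum_def by (rule cscalar_prod_vec_sum_left) auto

lemma orbit_sum_scale: "orbit_sum v (\<lambda>x. k * f x) = k \<cdot>\<^sub>v orbit_sum v f"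
  unfolding orbit_sum_def by (auto simp: sum_distrib_left mult.assoc)

lemma matrix_coeff_L2: "matrix_coeff v w \<in> L2 G"
  unfolding matrix_coeff_def L2_def by simp

lemma matrix_coeff_smult:
  "v \<in> carrier_vec d \<Longrightarrow> w \<in> carrier_vec d \<Longrightarrow> matrix_coeff v (k \<cdot>\<^sub>v w) = (\<lambda>s. k * matrix_coeff v w s)"
  unfolding matrix_coeff_def by auto

lemma matrix_coeff_diff:
  assumes "v \<in> carrier_vec d" "w \<in> carrier_vec d" "w' \<in> carrier_vec d"
  shows "(\<lambda>s. matrix_coeff v w s - matrix_coeff v w' s) = matrix_coeff v (w - w')"
  unfolding matrix_coeff_def using assms by (auto simp: minus_scalar_prod_distrib[of _ d])

lemma l2_inner_matrix_coeff:
  assumes v: "v \<in> carrier_vec d" and w: "w \<in> carrier_vec d"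
  shows "l2_inner G f (matrix_coeff v w) = orbit_sum v f \<bullet>c w"
proof -
  have "l2_inner G f (matrix_coeff v w) = (\<Sum>x\<in>carrier G. f x * ((\<rho> x *\<^sub>v v) \<bullet>c w))"
    unfolding l2_inner_def matrix_coeff_def using v w by (intro sum.cong refl) (simp add: cscalar_prod_conj_swap[of w d])
  then show ?thesis using v w by (simp add: cscalar_prod_orbit_sum)
qed

lemma matrix_coeff_orbit_sum:
  assumes "u \<in> carrier_vec d" "w \<in> carrier_vec d"
  shows "matrix_coeff u (orbit_sum w f) = (\<lambda>s. \<Sum>x\<in>carrier G. f x * matrix_coeff u (\<rho> x *\<^sub>v w) s)"
  unfolding matrix_coeff_def using assms by (auto simp: cscalar_prod_orbit_sum)

lemma left_reg_apply:
  assumes "g \<in> carrier G"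
  shows "left_reg G g f s = (if s \<in> carrier G then f (inv g \<otimes> s) else 0)"
proof -
  have "(\<Sum>x\<in>carrier G. delta G g x * f (inv x \<otimes> s)) = (\<Sum>x\<in>carrier G. if x = g then f (inv x \<otimes> s) else 0)"
    unfolding delta_def by (rule sum.cong) auto
  then show ?thesis
    unfolding left_reg_def conv_def using assms finite_carrier by simp
qed

lemma left_reg_L2: "left_reg G g f \<in> L2 G"
  unfolding left_reg_def conv_def L2_def by simp

lemma left_reg_matrix_coeff:
  assumes g: "g \<in> carrier G" and v: "v \<in> carrier_vec d" and w: "w \<in> carrier_vec d"
  shows "left_reg G g (matrix_coeff v w) = matrix_coeff v (\<rho> g *\<^sub>v w)"
proof
  fix s
  show "left_reg G g (matrix_coeff v w) s = matrix_coeff v (\<rho> g *\<^sub>v w) s"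
  proof (cases "s \<in> carrier G")
    case s: True
    have "w \<bullet>c (\<rho> (inv g \<otimes> s) *\<^sub>v v) = w \<bullet>c (mat_adjoint (\<rho> g) *\<^sub>v (\<rho> s *\<^sub>v v))"
      using g s v by (simp add: rep_mult_vec rep_inv)
    also have "\<dots> = (\<rho> g *\<^sub>v w) \<bullet>c (\<rho> s *\<^sub>v v)"
      using g s v w by (simp add: cscalar_prod_mat_adjoint[OF rep_carrier])
    finally show ?thesis using g s by (simp add: left_reg_apply matrix_coeff_def)
  qed (simp add: left_reg_apply g matrix_coeff_def)
qed

lemma mult_orbit_sum:
  assumes g: "g \<in> carrier G" and u: "u \<in> carrier_vec d"
  shows "\<rho> g *\<^sub>v orbit_sum u f = orbit_sum u (left_reg G g f)"
proof -
  have "\<rho> g *\<^sub>v orbit_sum u f = vec d (\<lambda>i. \<Sum>x\<in>carrier G. f x * (\<rho> (g \<otimes> x) *\<^sub>v u) $ i)"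
    unfolding orbit_sum_def using g u by (simp add: mult_mat_vec_sum[OF rep_carrier] rep_mult_vec)
  also have "\<dots> = vec d (\<lambda>i. \<Sum>y\<in>carrier G. f (inv g \<otimes> y) * (\<rho> y *\<^sub>v u) $ i)"
    using sum_left_translate[OF g, of "\<lambda>y. f (inv g \<otimes> y) * (\<rho> y *\<^sub>v u) $ _"] g
    by (simp add: m_assoc[symmetric])
  also have "\<dots> = orbit_sum u (left_reg G g f)"
    unfolding orbit_sum_def using g by (auto simp: left_reg_apply intro!: sum.cong)
  finally show ?thesis .
qed

subsection \<open>Schur orthogonality\<close>

lemma orbit_sum_matrix_coeff_commute:
  assumes "g \<in> carrier G" "u \<in> carrier_vec d" "v \<in> carrier_vec d" "w \<in> carrier_vec d"
  shows "orbit_sum u (matrix_coeff v (\<rho> g *\<^sub>v w)) = \<rho> g *\<^sub>v orbit_sum u (matrix_coeff v w)"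
  using assms by (simp add: left_reg_matrix_coeff[symmetric] mult_orbit_sum)

lemma orbit_sum_matrix_coeff_scalar:
  assumes u: "u \<in> carrier_vec d" and v: "v \<in> carrier_vec d"
  shows "\<exists>\<mu>. \<forall>w\<in>carrier_vec d. orbit_sum u (matrix_coeff v w) = \<mu> \<cdot>\<^sub>v w"
proof -
  define C where "C = mat d d (\<lambda>(i, j). \<Sum>x\<in>carrier G. cnj ((\<rho> x *\<^sub>v v) $ j) * (\<rho> x *\<^sub>v u) $ i)"
  have C_carrier: "C \<in> carrier_mat d d" unfolding C_def by simp
  have C_apply: "C *\<^sub>v w = orbit_sum u (matrix_coeff v w)" if w: "w \<in> carrier_vec d" for w
  proof (rule eq_vecI)
    fix i assume "i < dim_vec (orbit_sum u (matrix_coeff v w))"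
    then have i: "i < d" by simp
    have "(C *\<^sub>v w) $ i = (\<Sum>j<d. \<Sum>x\<in>carrier G. w $ j * cnj ((\<rho> x *\<^sub>v v) $ j) * (\<rho> x *\<^sub>v u) $ i)"
      using i w unfolding C_def by (simp add: scalar_prod_def lessThan_atLeast0 sum_distrib_left mult_ac)
    also have "\<dots> = (\<Sum>x\<in>carrier G. \<Sum>j<d. w $ j * cnj ((\<rho> x *\<^sub>v v) $ j) * (\<rho> x *\<^sub>v u) $ i)"
      by (rule sum.swap)
    also have "\<dots> = orbit_sum u (matrix_coeff v w) $ i"
      using i w v unfolding orbit_sum_def matrix_coeff_def
      by (auto simp: rep_dim scalar_prod_def lessThan_atLeast0 sum_distrib_right intro!: sum.cong)
    finally show "(C *\<^sub>v w) $ i = orbit_sum u (matrix_coeff v w) $ i" .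
  qed (use C_carrier in simp)
  have "\<exists>\<mu>. \<forall>w\<in>carrier_vec d. C *\<^sub>v w = \<mu> \<cdot>\<^sub>v w"
    by (rule commuting_mat_scalar[OF C_carrier]) (simp add: C_apply u v orbit_sum_matrix_coeff_commute)
  then show ?thesis using C_apply by auto
qed

lemma orbit_sum_matrix_coeff_swap:
  assumes u: "u \<in> carrier_vec d" and v: "v \<in> carrier_vec d" and w: "w \<in> carrier_vec d" and z: "z \<in> carrier_vec d"
  shows "orbit_sum u (matrix_coeff v w) \<bullet>c z = orbit_sum w (matrix_coeff z u) \<bullet>c v"
proof -
  have "orbit_sum u (matrix_coeff v w) \<bullet>c z = (\<Sum>x\<in>carrier G. (w \<bullet>c (\<rho> x *\<^sub>v v)) * ((\<rho> x *\<^sub>v u) \<bullet>c z))"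
    using u z by (simp add: cscalar_prod_orbit_sum matrix_coeff_def)
  also have "\<dots> = (\<Sum>x\<in>carrier G. (w \<bullet>c (\<rho> (inv x) *\<^sub>v v)) * ((\<rho> (inv x) *\<^sub>v u) \<bullet>c z))"
    by (rule sum_inv_reindex[symmetric])
  also have "\<dots> = (\<Sum>x\<in>carrier G. (u \<bullet>c (\<rho> x *\<^sub>v z)) * ((\<rho> x *\<^sub>v w) \<bullet>c v))"
  proof (rule sum.cong[OF refl])
    fix x assume x: "x \<in> carrier G"
    have adjoint_v: "w \<bullet>c (\<rho> (inv x) *\<^sub>v v) = (\<rho> x *\<^sub>v w) \<bullet>c v"
      using x v w by (simp add: rep_inv cscalar_prod_mat_adjoint[OF rep_carrier])
    have "(\<rho> (inv x) *\<^sub>v u) \<bullet>c z = cnj (z \<bullet>c (mat_adjoint (\<rho> x) *\<^sub>v u))"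
      using x u z mat_adjoint_carrier[OF rep_carrier[OF x]]
      by (simp add: rep_inv cscalar_prod_conj_swap[of "mat_adjoint (\<rho> x) *\<^sub>v u" d z])
    also have "\<dots> = u \<bullet>c (\<rho> x *\<^sub>v z)"
      using x u z by (simp add: cscalar_prod_mat_adjoint[OF rep_carrier, symmetric] cscalar_prod_conj_swap[of u d])
    finally show "(w \<bullet>c (\<rho> (inv x) *\<^sub>v v)) * ((\<rho> (inv x) *\<^sub>v u) \<bullet>c z)
        = (u \<bullet>c (\<rho> x *\<^sub>v z)) * ((\<rho> x *\<^sub>v w) \<bullet>c v)"
      using adjoint_v by simp
  qed
  also have "\<dots> = orbit_sum w (matrix_coeff z u) \<bullet>c v"
    using w v by (simp add: cscalar_prod_orbit_sum matrix_coeff_def)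
  finally show ?thesis .
qed

lemma orbit_sum_matrix_coeff_self_nonzero:
  assumes v: "v \<in> carrier_vec d" "v \<noteq> 0\<^sub>v d"
  shows "orbit_sum v (matrix_coeff v v) \<bullet>c v \<noteq> 0"
proof
  assume "orbit_sum v (matrix_coeff v v) \<bullet>c v = 0"
  moreover have "orbit_sum v (matrix_coeff v v) \<bullet>c v = (\<Sum>x\<in>carrier G. (v \<bullet>c (\<rho> x *\<^sub>v v)) * cnj (v \<bullet>c (\<rho> x *\<^sub>v v)))"
    using v by (simp add: cscalar_prod_orbit_sum matrix_coeff_def cscalar_prod_conj_swap[of "\<rho> _ *\<^sub>v v" d v])
  also have "\<dots> = of_real (\<Sum>x\<in>carrier G. (cmod (v \<bullet>c (\<rho> x *\<^sub>v v)))\<^sup>2)"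
    unfolding of_real_sum complex_norm_square ..
  ultimately have "(\<Sum>x\<in>carrier G. (cmod (v \<bullet>c (\<rho> x *\<^sub>v v)))\<^sup>2) = 0"
    by (metis of_real_eq_0_iff)
  then have "v \<bullet>c (\<rho> \<one> *\<^sub>v v) = 0"
    using finite_carrier by (simp add: sum_nonneg_eq_0_iff)
  then show False using v by (simp add: rep_one)
qed

lemma schur_orthogonality:
  "\<exists>c. c \<noteq> 0 \<and> (\<forall>u\<in>carrier_vec d. \<forall>v\<in>carrier_vec d. \<forall>w\<in>carrier_vec d.
      orbit_sum u (matrix_coeff v w) = (c * (u \<bullet>c v)) \<cdot>\<^sub>v w)"
proof -
  define e :: "complex vec" where "e = unit_vec d 0"
  have e: "e \<in> carrier_vec d" "e \<noteq> 0\<^sub>v d" "e \<bullet>c e = 1"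
    unfolding e_def using dim_pos by (auto simp: cscalar_prod_unit_vec)
  obtain c where c: "\<And>w. w \<in> carrier_vec d \<Longrightarrow> orbit_sum e (matrix_coeff e w) = c \<cdot>\<^sub>v w"
    using orbit_sum_matrix_coeff_scalar[OF e(1) e(1)] by blast
  have "orbit_sum u (matrix_coeff v w) = (c * (u \<bullet>c v)) \<cdot>\<^sub>v w"
    if u: "u \<in> carrier_vec d" and v: "v \<in> carrier_vec d" and w: "w \<in> carrier_vec d" for u v w
  proof -
    obtain \<mu> where \<mu>: "\<And>w. w \<in> carrier_vec d \<Longrightarrow> orbit_sum u (matrix_coeff v w) = \<mu> \<cdot>\<^sub>v w"
      using orbit_sum_matrix_coeff_scalar[OF u v] by blast
    have "\<mu> = orbit_sum u (matrix_coeff v e) \<bullet>c e" using \<mu> e by simp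
    also have "\<dots> = orbit_sum e (matrix_coeff e u) \<bullet>c v" using u v e by (simp add: orbit_sum_matrix_coeff_swap)
    also have "\<dots> = c * (u \<bullet>c v)" using c u v by simp
    finally show ?thesis using \<mu> w by simp
  qed
  moreover have "c \<noteq> 0"
    using orbit_sum_matrix_coeff_self_nonzero[OF e(1,2)] c e by simp
  ultimately show ?thesis by blast
qed

(* One can show orth_const = |G| / d; only orth_const \<noteq> 0 is needed. *)
definition orth_const :: complex where
  "orth_const = (SOME c. c \<noteq> 0 \<and> (\<forall>u\<in>carrier_vec d. \<forall>v\<in>carrier_vec d. \<forall>w\<in>carrier_vec d.
      orbit_sum u (matrix_coeff v w) = (c * (u \<bullet>c v)) \<cdot>\<^sub>v w))"

lemma orth_const_nonzero: "orth_const \<noteq> 0"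
  and orbit_sum_matrix_coeff: "u \<in> carrier_vec d \<Longrightarrow> v \<in> carrier_vec d \<Longrightarrow> w \<in> carrier_vec d \<Longrightarrow>
      orbit_sum u (matrix_coeff v w) = (orth_const * (u \<bullet>c v)) \<cdot>\<^sub>v w"
  using someI_ex[OF schur_orthogonality] unfolding orth_const_def by blast+

lemma gram_column_eq_matrix_coeff:
  assumes v: "v \<in> carrier_vec d"
  shows "(\<lambda>g1. if g1 \<in> carrier G then \<Sum>g2\<in>carrier G. gram \<rho> v g1 g2 * c g2 else 0) = matrix_coeff v (orbit_sum v c)"
  using v by (auto simp: matrix_coeff_def gram_def cscalar_prod_orbit_sum mult.commute)

definition proj_vec :: "complex vec \<Rightarrow> ('a \<Rightarrow> complex) \<Rightarrow> complex vec" where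
  "proj_vec v f = (1 / (orth_const * (v \<bullet>c v))) \<cdot>\<^sub>v orbit_sum v f"

lemma proj_vec_carrier [simp]: "proj_vec v f \<in> carrier_vec d"
  unfolding proj_vec_def by simp

lemma proj_vec_matrix_coeff: "v \<in> carrier_vec d \<Longrightarrow> v \<noteq> 0\<^sub>v d \<Longrightarrow> w \<in> carrier_vec d \<Longrightarrow> proj_vec v (matrix_coeff v w) = w"
  unfolding proj_vec_def using orth_const_nonzero by (simp add: orbit_sum_matrix_coeff smult_smult_assoc)

lemma gram_colspace_eq:
  assumes v: "v \<in> carrier_vec d" "v \<noteq> 0\<^sub>v d"
  shows "gram_colspace G \<rho> v = matrix_coeff v ` carrier_vec d"
proof (intro equalityI subsetI)
  fix f assume "f \<in> gram_colspace G \<rho> v"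
  then obtain c where "f = (\<lambda>g1. if g1 \<in> carrier G then \<Sum>g2\<in>carrier G. gram \<rho> v g1 g2 * c g2 else 0)"
    unfolding gram_colspace_def by blast
  then show "f \<in> matrix_coeff v ` carrier_vec d"
    using gram_column_eq_matrix_coeff[OF v(1)] by auto
next
  fix f assume "f \<in> matrix_coeff v ` carrier_vec d"
  then obtain w where w: "w \<in> carrier_vec d" "f = matrix_coeff v w" by blast
  define c where "c x = 1 / (orth_const * (v \<bullet>c v)) * matrix_coeff v w x" for x
  have "orbit_sum v c = w"
    using proj_vec_matrix_coeff[OF v w(1)] unfolding c_def proj_vec_def by (simp only: orbit_sum_scale)
  then have "f = (\<lambda>g1. if g1 \<in> carrier G then \<Sum>g2\<in>carrier G. gram \<rho> v g1 g2 * c g2 else 0)"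
    using gram_column_eq_matrix_coeff[OF v(1)] w by simp
  then show "f \<in> gram_colspace G \<rho> v"
    unfolding gram_colspace_def by blast
qed

lemma proj_vec_orthogonal:
  assumes v: "v \<in> carrier_vec d" "v \<noteq> 0\<^sub>v d" and h: "h \<in> gram_colspace G \<rho> v"
  shows "l2_inner G (\<lambda>x. f x - matrix_coeff v (proj_vec v f) x) h = 0"
proof -
  obtain w where w: "w \<in> carrier_vec d" "h = matrix_coeff v w"
    using h by (auto simp: gram_colspace_eq[OF v])
  have "orbit_sum v (matrix_coeff v (proj_vec v f)) = orbit_sum v f"
    using v orth_const_nonzero by (simp add: orbit_sum_matrix_coeff proj_vec_def smult_smult_assoc)
  then show ?thesis
    using v w by (simp add: l2_inner_diff_left l2_inner_matrix_coeff)
qed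

lemma orth_proj_gram_colspace:
  assumes v: "v \<in> carrier_vec d" "v \<noteq> 0\<^sub>v d"
  shows "orth_proj G (gram_colspace G \<rho> v) f = matrix_coeff v (proj_vec v f)"
proof (rule orth_proj_eqI[OF finite_carrier])
  show "gram_colspace G \<rho> v \<subseteq> L2 G"
    using matrix_coeff_L2 by (auto simp: gram_colspace_eq[OF v])
  show "(\<lambda>x. p x - q x) \<in> gram_colspace G \<rho> v"
    if "p \<in> gram_colspace G \<rho> v" "q \<in> gram_colspace G \<rho> v" for p q
    using that v(1) by (auto simp: gram_colspace_eq[OF v] matrix_coeff_diff)
  show "matrix_coeff v (proj_vec v f) \<in> gram_colspace G \<rho> v"
    by (simp add: gram_colspace_eq[OF v])
qed (rule proj_vec_orthogonal[OF v])

lemma orth_proj_matrix_coeff: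
  assumes v: "v \<in> carrier_vec d" "v \<noteq> 0\<^sub>v d" and u: "u \<in> carrier_vec d" and w: "w \<in> carrier_vec d"
  shows "orth_proj G (gram_colspace G \<rho> v) (\<lambda>s. k * matrix_coeff u w s) = (\<lambda>s. (k * (v \<bullet>c u) / (v \<bullet>c v)) * matrix_coeff v w s)"
proof -
  have "proj_vec v (\<lambda>s. k * matrix_coeff u w s) = (k * (v \<bullet>c u) / (v \<bullet>c v)) \<cdot>\<^sub>v w"
    using v u w orth_const_nonzero by (simp add: proj_vec_def orbit_sum_scale orbit_sum_matrix_coeff smult_smult_assoc)
  then show ?thesis
    using v w by (simp add: orth_proj_gram_colspace matrix_coeff_smult)
qed

lemma cnj_character_inv_mult:
  assumes x: "x \<in> carrier G" and t: "t \<in> carrier G"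
  shows "cnj (character d \<rho> (inv x \<otimes> t)) = (\<Sum>i<d. col (\<rho> x) i \<bullet>c col (\<rho> t) i)"
  unfolding character_def
  using x t cnj_trace_adjoint_mult[OF rep_carrier[OF x] rep_carrier[OF t]] by (simp add: rep_mult rep_inv)

lemma A_op_matrix_coeff:
  assumes a: "a \<in> carrier G" and v: "v \<in> carrier_vec d" and w: "w \<in> carrier_vec d"
  shows "A_op G (character d \<rho>) a (matrix_coeff v w) = (\<lambda>s. orth_const * matrix_coeff (\<rho> a *\<^sub>v v) w s)"
proof
  fix s
  show "A_op G (character d \<rho>) a (matrix_coeff v w) s = orth_const * matrix_coeff (\<rho> a *\<^sub>v v) w s"
  proof (cases "s \<in> carrier G")
    case s: True
    define t where "t = s \<otimes> a"
    have t: "t \<in> carrier G" unfolding t_def using s a by simp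
    have "A_op G (character d \<rho>) a (matrix_coeff v w) s
        = (\<Sum>x\<in>carrier G. matrix_coeff v w x * (\<Sum>i<d. col (\<rho> x) i \<bullet>c col (\<rho> t) i))"
      unfolding A_op_def conv_def t_def using s a
      by (auto simp: m_assoc cnj_character_inv_mult[symmetric] intro!: sum.cong)
    also have "\<dots> = (\<Sum>i<d. \<Sum>x\<in>carrier G. matrix_coeff v w x * ((\<rho> x *\<^sub>v unit_vec d i) \<bullet>c col (\<rho> t) i))"
      by (simp add: sum_distrib_left mult_mat_vec_unit_vec[OF rep_carrier] sum.swap[of _ "carrier G"])
    also have "\<dots> = (\<Sum>i<d. orbit_sum (unit_vec d i) (matrix_coeff v w) \<bullet>c col (\<rho> t) i)"
      using t by (simp add: cscalar_prod_orbit_sum rep_carrier)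
    also have "\<dots> = orth_const * (\<Sum>i<d. cnj (v $ i) * (w \<bullet>c col (\<rho> t) i))"
      using t v w by (simp add: orbit_sum_matrix_coeff cscalar_prod_unit_vec sum_distrib_left rep_carrier mult.assoc)
    also have "\<dots> = orth_const * (w \<bullet>c (\<rho> t *\<^sub>v v))"
      using t v w by (simp add: cscalar_prod_mult_mat_vec_cols[OF rep_carrier])
    finally show ?thesis
      unfolding t_def using s a v by (simp add: matrix_coeff_def rep_mult_vec)
  qed (simp add: A_op_def conv_def matrix_coeff_def)
qed

lemma exists_cscalar_prod_rep_nonzero:
  assumes u: "u \<in> carrier_vec d" "u \<noteq> 0\<^sub>v d" and v: "v \<in> carrier_vec d" "v \<noteq> 0\<^sub>v d"
  shows "\<exists>a\<in>carrier G. v \<bullet>c (\<rho> a *\<^sub>v u) \<noteq> 0"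
proof (rule ccontr)
  assume "\<not> ?thesis"
  then have "orbit_sum u (matrix_coeff u v) \<bullet>c v = 0"
    using u v by (simp add: cscalar_prod_orbit_sum matrix_coeff_def)
  moreover have "orbit_sum u (matrix_coeff u v) \<bullet>c v = orth_const * (u \<bullet>c u) * (v \<bullet>c v)"
    using u v by (simp add: orbit_sum_matrix_coeff)
  ultimately show False
    using u v orth_const_nonzero by simp
qed

end

section \<open>G-linear maps between Gram column spaces\<close>

locale gram_intertwiner = unitary_irrep G d \<rho> for G :: "('a, 'b) monoid_scheme" (structure) and d \<rho> +
  fixes v1 v2 :: "complex vec" and M :: "('a \<Rightarrow> complex) \<Rightarrow> 'a \<Rightarrow> complex"
  assumes v1: "v1 \<in> carrier_vec d" "v1 \<noteq> 0\<^sub>v d"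
    and v2: "v2 \<in> carrier_vec d" "v2 \<noteq> 0\<^sub>v d"
    and M_add: "\<And>f h. f \<in> L2 G \<Longrightarrow> h \<in> L2 G \<Longrightarrow> M (\<lambda>x. f x + h x) = (\<lambda>x. M f x + M h x)"
    and M_scale: "\<And>c f. f \<in> L2 G \<Longrightarrow> M (\<lambda>x. c * f x) = (\<lambda>x. c * M f x)"
    and M_onto: "M ` gram_colspace G \<rho> v1 = gram_colspace G \<rho> v2"
    and M_perp: "\<And>f. f \<in> L2 G \<Longrightarrow> (\<forall>w\<in>gram_colspace G \<rho> v1. l2_inner G f w = 0) \<Longrightarrow> M f = (\<lambda>x. 0)"
    and M_Glin: "\<And>g f. g \<in> carrier G \<Longrightarrow> f \<in> L2 G \<Longrightarrow> M (left_reg G g f) = left_reg G g (M f)"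
begin

lemma M_lincomb:
  assumes "finite A" and "\<And>x. x \<in> A \<Longrightarrow> h x \<in> L2 G"
  shows "M (\<lambda>s. \<Sum>x\<in>A. a x * h x s) = (\<lambda>s. \<Sum>x\<in>A. a x * M (h x) s)"
  using assms
proof (induction A rule: finite_induct)
  case empty
  have "(\<lambda>x. 0) \<in> L2 G" by (simp add: L2_def)
  then show ?case using M_scale[of "\<lambda>x. 0" 0] by simp
next
  case (insert y A)
  have "(\<lambda>s. a y * h y s) \<in> L2 G" "(\<lambda>s. \<Sum>x\<in>A. a x * h x s) \<in> L2 G"
    using insert.prems unfolding L2_def by auto
  then show ?case
    using insert by (simp add: M_add M_scale)
qed

lemma M_matrix_coeff: "\<exists>\<nu>. \<nu> \<noteq> 0 \<and> (\<forall>w\<in>carrier_vec d. M (matrix_coeff v1 w) = (\<lambda>s. \<nu> * matrix_coeff v2 w s))"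
proof -
  obtain w0 where w0: "w0 \<in> carrier_vec d" "M (matrix_coeff v1 v1) = matrix_coeff v2 w0"
    using M_onto v1 by (auto simp: gram_colspace_eq[OF v1] gram_colspace_eq[OF v2])
  define \<nu> where "\<nu> = (w0 \<bullet>c v1) / (v1 \<bullet>c v1)"
  have M_eq: "M (matrix_coeff v1 w) = (\<lambda>s. \<nu> * matrix_coeff v2 w s)" if w: "w \<in> carrier_vec d" for w
  proof -
    define c where "c x = 1 / (orth_const * (v1 \<bullet>c v1)) * matrix_coeff v1 w x" for x
    have c: "orbit_sum v c = (1 / (orth_const * (v1 \<bullet>c v1))) \<cdot>\<^sub>v orbit_sum v (matrix_coeff v1 w)" for v
      unfolding c_def by (rule orbit_sum_scale)
    have "M (matrix_coeff v1 w) = M (\<lambda>s. \<Sum>x\<in>carrier G. c x * left_reg G x (matrix_coeff v1 v1) s)"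
      using matrix_coeff_orbit_sum[OF v1(1) v1(1), of c] v1 w
      by (simp add: c proj_vec_matrix_coeff[unfolded proj_vec_def] left_reg_matrix_coeff)
    also have "\<dots> = (\<lambda>s. \<Sum>x\<in>carrier G. c x * matrix_coeff v2 (\<rho> x *\<^sub>v w0) s)"
      using finite_carrier v2 w0 by (simp add: M_lincomb left_reg_L2 M_Glin matrix_coeff_L2 left_reg_matrix_coeff)
    also have "\<dots> = matrix_coeff v2 (orbit_sum w0 c)"
      using matrix_coeff_orbit_sum[OF v2(1) w0(1)] by simp
    also have "orbit_sum w0 c = \<nu> \<cdot>\<^sub>v w"
      using v1 w0 w orth_const_nonzero by (simp add: c orbit_sum_matrix_coeff smult_smult_assoc \<nu>_def)
    finally show ?thesis using v2 w by (simp add: matrix_coeff_smult)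
  qed
  moreover have "\<nu> \<noteq> 0"
  proof
    assume "\<nu> = 0"
    obtain w where "w \<in> carrier_vec d" "matrix_coeff v2 v2 = M (matrix_coeff v1 w)"
      using M_onto v2 by (force simp: gram_colspace_eq[OF v1] gram_colspace_eq[OF v2])
    then have "matrix_coeff v2 v2 \<one> = 0" using M_eq \<open>\<nu> = 0\<close> by simp
    then show False using v2 by (simp add: matrix_coeff_def rep_one)
  qed
  ultimately show ?thesis by blast
qed

lemma M_orth_proj: "f \<in> L2 G \<Longrightarrow> M f = M (orth_proj G (gram_colspace G \<rho> v1) f)"
proof -
  assume f: "f \<in> L2 G"
  define p where "p = orth_proj G (gram_colspace G \<rho> v1) f"
  have p: "p = matrix_coeff v1 (proj_vec v1 f)" unfolding p_def by (rule orth_proj_gram_colspace[OF v1])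
  have L2: "p \<in> L2 G" "(\<lambda>x. f x - p x) \<in> L2 G" using f matrix_coeff_L2 unfolding p L2_def by auto
  have "M f = M (\<lambda>x. p x + (f x - p x))" by simp
  also have "\<dots> = (\<lambda>x. M p x + M (\<lambda>x. f x - p x) x)" using L2 by (rule M_add)
  also have "M (\<lambda>x. f x - p x) = (\<lambda>x. 0)"
    using proj_vec_orthogonal[OF v1] L2(2) unfolding p by (simp add: M_perp)
  finally show ?thesis unfolding p_def by simp
qed

end

theorem mainTheorem4:
  fixes G :: "('a, 'b) monoid_scheme" and d :: nat and \<rho>' :: "'a \<Rightarrow> complex mat"
    and v1 v2 :: "complex vec" and M :: "('a \<Rightarrow> complex) \<Rightarrow> 'a \<Rightarrow> complex"
  defines "\<chi> \<equiv> character d \<rho>'"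
    and "V1 \<equiv> gram_colspace G \<rho>' v1"
    and "V2 \<equiv> gram_colspace G \<rho>' v2"
  assumes grp: "group G" and fin: "finite (carrier G)"
    and rep: "unitary_rep G d \<rho>'" and irr: "irreducible_rep G d \<rho>'"
    and v1: "v1 \<in> carrier_vec d" "v1 \<noteq> 0\<^sub>v d"
    and v2: "v2 \<in> carrier_vec d" "v2 \<noteq> 0\<^sub>v d"
    and M_L2: "\<And>f. f \<in> L2 G \<Longrightarrow> M f \<in> L2 G"
    and M_add: "\<And>f h. f \<in> L2 G \<Longrightarrow> h \<in> L2 G \<Longrightarrow> M (\<lambda>x. f x + h x) = (\<lambda>x. M f x + M h x)"
    and M_scale: "\<And>c f. f \<in> L2 G \<Longrightarrow> M (\<lambda>x. c * f x) = (\<lambda>x. c * M f x)"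
    and M_onto: "M ` V1 = V2"
    and M_isom: "\<And>f h. f \<in> V1 \<Longrightarrow> h \<in> V1 \<Longrightarrow> l2_inner G (M f) (M h) = l2_inner G f h"
    and M_perp: "\<And>f. f \<in> L2 G \<Longrightarrow> (\<forall>w\<in>V1. l2_inner G f w = 0) \<Longrightarrow> M f = (\<lambda>x. 0)"
    and M_Glin: "\<And>g f. g \<in> carrier G \<Longrightarrow> f \<in> L2 G \<Longrightarrow> M (left_reg G g f) = left_reg G g (M f)"
  shows "\<exists>lam :: 'a \<Rightarrow> complex.
           (\<forall>a\<in>carrier G. \<forall>f\<in>L2 G.
              (\<lambda>x. lam a * M f x) = orth_proj G V2 (A_op G \<chi> a (orth_proj G V1 f)))
         \<and> (\<exists>a\<in>carrier G. lam a \<noteq> 0)"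
proof -
  have "unitary_irrep G d \<rho>'"
    by (rule unitary_irrep.intro[OF grp unitary_irrep_axioms.intro[OF fin rep irr]])
  then interpret gram_intertwiner G d \<rho>' v1 v2 M
    by (rule gram_intertwiner.intro, intro gram_intertwiner_axioms.intro)
      (use v1 v2 M_add M_scale M_onto M_perp M_Glin in \<open>auto simp: V1_def V2_def\<close>)
  obtain \<nu> where \<nu>: "\<nu> \<noteq> 0" "\<And>w. w \<in> carrier_vec d \<Longrightarrow> M (matrix_coeff v1 w) = (\<lambda>s. \<nu> * matrix_coeff v2 w s)"
    using M_matrix_coeff by blast
  define lam where "lam a = orth_const * (v2 \<bullet>c (\<rho>' a *\<^sub>v v1)) / ((v2 \<bullet>c v2) * \<nu>)" for a
  have "(\<lambda>x. lam a * M f x) = orth_proj G V2 (A_op G \<chi> a (orth_proj G V1 f))"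
    if a: "a \<in> carrier G" and f: "f \<in> L2 G" for a f
  proof -
    let ?w = "proj_vec v1 f"
    have "orth_proj G V2 (A_op G \<chi> a (orth_proj G V1 f)) = orth_proj G V2 (\<lambda>s. orth_const * matrix_coeff (\<rho>' a *\<^sub>v v1) ?w s)"
      unfolding V1_def \<chi>_def using a v1 by (simp add: orth_proj_gram_colspace A_op_matrix_coeff)
    also have "\<dots> = (\<lambda>s. (orth_const * (v2 \<bullet>c (\<rho>' a *\<^sub>v v1)) / (v2 \<bullet>c v2)) * matrix_coeff v2 ?w s)"
      unfolding V2_def using a v1 v2 by (simp add: orth_proj_matrix_coeff)
    also have "\<dots> = (\<lambda>x. lam a * M f x)"
      using f \<nu> v1 by (simp add: M_orth_proj orth_proj_gram_colspace lam_def mult.assoc)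
    finally show ?thesis ..
  qed
  moreover obtain a where "a \<in> carrier G" "v2 \<bullet>c (\<rho>' a *\<^sub>v v1) \<noteq> 0"
    using exists_cscalar_prod_rep_nonzero[OF v1 v2] by blast
  then have "lam a \<noteq> 0" using v2 \<nu> orth_const_nonzero by (simp add: lam_def)
  ultimately show ?thesis using \<open>a \<in> carrier G\<close> by blast
qed

end
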